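(* Let $F$ be a hyperfield, let $p$ be an irreducible polynomial over $F$, let $n\geq 2$ and let $q_1,\dots,q_n$ be polynomials over $F$ with $p\in\boxdot_{i=1}^n q_i$. Then there is an $i\in\{1,\dots,n\}$ such that $p\sim q_i$.
   Context: A hyperfield is a set $F$ with a commutative multiplication and a multivalued addition $\boxplus:F\times F\to\mathcal P(F)$ such that: there are unique $0,1\in F$ with $(F,\cdot,1)$ a commutative monoid and $F\setminus\{0\}$ a group; $ab\boxplus ac=\{ad: d\in b\boxplus c\}$; and $(F,\boxplus,0)$ is a commutative hypergroup (sums non-empty, commutative, $a\boxplus 0=\{a\}$, unique additive inverse, associative). A polynomial over $F$ is a finitely supported sequence $(c_i)_{i\in\mathbb N}$ in $F$, written $\sum c_iT^i$; its degree is the largest $k$ with $c_k\neq0$. The hyperproduct of $p=\sum c_iT^i$ and $q=\sum d_iT^i$ is $p\boxdot q=\{\sum e_iT^i : e_i\in \boxplus_{k+l=i} c_kd_l\}$, and $\boxdot_{i=1}^n q_i=\bigcup_{r\in\boxdot_{i=1}^{n-1}q_i} r\boxdot q_n$. Polynomials $p,q$ are associated, $p\sim q$, if $p\in a\boxdot q$ for some $a\in F\setminus\{0\}$ (constants viewed as constant polynomials). A polynomial $p$ is irreducible if $\deg p\geq1$ and for every $q_1,q_2$ with $p\in q_1\boxdot q_2$ we have $p\sim q_1$ or $p\sim q_2$. *)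

theory Defs
  imports Main
begin

definition hyperfield ::
  "('a \<Rightarrow> 'a \<Rightarrow> 'a) \<Rightarrow> ('a \<Rightarrow> 'a \<Rightarrow> 'a set) \<Rightarrow> 'a \<Rightarrow> 'a \<Rightarrow> bool" where
  "hyperfield mul add z e \<longleftrightarrow>
     \<comment> \<open>(F, mul, e) commutative monoid\<close>
     (\<forall>a b c. mul (mul a b) c = mul a (mul b c)) \<and>
     (\<forall>a b. mul a b = mul b a) \<and>
     (\<forall>a. mul e a = a) \<and>
     \<comment> \<open>F without z is a group under mul\<close>
     e \<noteq> z \<and>
     (\<forall>a b. a \<noteq> z \<longrightarrow> b \<noteq> z \<longrightarrow> mul a b \<noteq> z) \<and>
     (\<forall>a. a \<noteq> z \<longrightarrow> (\<exists>b. b \<noteq> z \<and> mul a b = e)) \<and>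
     \<comment> \<open>distributivity\<close>
     (\<forall>a b c. add (mul a b) (mul a c) = mul a ` add b c) \<and>
     \<comment> \<open>commutative hypergroup\<close>
     (\<forall>a b. add a b \<noteq> {}) \<and>
     (\<forall>a b. add a b = add b a) \<and>
     (\<forall>a. add a z = {a}) \<and>
     (\<forall>a. \<exists>!b. z \<in> add a b) \<and>
     (\<forall>a b c. (\<Union>x\<in>add a b. add x c) = (\<Union>x\<in>add b c. add a x))"

definition is_poly :: "'a \<Rightarrow> (nat \<Rightarrow> 'a) \<Rightarrow> bool" where
  "is_poly z c \<longleftrightarrow> finite {i. c i \<noteq> z}"

definition const_poly :: "'a \<Rightarrow> 'a \<Rightarrow> (nat \<Rightarrow> 'a)" where
  "const_poly z a = (\<lambda>i. if i = 0 then a else z)"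

text \<open>Iterated hypersum of a list of elements (order irrelevant by commutativity/associativity).\<close>

fun hsum :: "('a \<Rightarrow> 'a \<Rightarrow> 'a set) \<Rightarrow> 'a \<Rightarrow> 'a list \<Rightarrow> 'a set" where
  "hsum add z [] = {z}"
| "hsum add z (x # xs) = (\<Union>y\<in>hsum add z xs. add x y)"

definition hprod ::
  "('a \<Rightarrow> 'a \<Rightarrow> 'a) \<Rightarrow> ('a \<Rightarrow> 'a \<Rightarrow> 'a set) \<Rightarrow> 'a \<Rightarrow>
   (nat \<Rightarrow> 'a) \<Rightarrow> (nat \<Rightarrow> 'a) \<Rightarrow> (nat \<Rightarrow> 'a) set" where
  "hprod mul add z p q =
     {r. is_poly z r \<and> (\<forall>i. r i \<in> hsum add z (map (\<lambda>k. mul (p k) (q (i - k))) [0..<Suc i]))}"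

text \<open>Iterated hyperproduct of q 1, ..., q n (meaningful for n >= 1).\<close>

fun hprodn ::
  "('a \<Rightarrow> 'a \<Rightarrow> 'a) \<Rightarrow> ('a \<Rightarrow> 'a \<Rightarrow> 'a set) \<Rightarrow> 'a \<Rightarrow>
   (nat \<Rightarrow> nat \<Rightarrow> 'a) \<Rightarrow> nat \<Rightarrow> (nat \<Rightarrow> 'a) set" where
  "hprodn mul add z q 0 = {}"
| "hprodn mul add z q (Suc 0) = {q 1}"
| "hprodn mul add z q (Suc (Suc m)) =
     (\<Union>r\<in>hprodn mul add z q (Suc m). hprod mul add z r (q (Suc (Suc m))))"

definition poly_assoc ::
  "('a \<Rightarrow> 'a \<Rightarrow> 'a) \<Rightarrow> ('a \<Rightarrow> 'a \<Rightarrow> 'a set) \<Rightarrow> 'a \<Rightarrow> (nat \<Rightarrow> 'a) \<Rightarrow> (nat \<Rightarrow> 'a) \<Rightarrow> bool" where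
  "poly_assoc mul add z p q \<longleftrightarrow> (\<exists>a. a \<noteq> z \<and> p \<in> hprod mul add z (const_poly z a) q)"

definition poly_irreducible ::
  "('a \<Rightarrow> 'a \<Rightarrow> 'a) \<Rightarrow> ('a \<Rightarrow> 'a \<Rightarrow> 'a set) \<Rightarrow> 'a \<Rightarrow> (nat \<Rightarrow> 'a) \<Rightarrow> bool" where
  "poly_irreducible mul add z p \<longleftrightarrow>
     (\<exists>k\<ge>1. p k \<noteq> z) \<and>
     (\<forall>q1 q2. is_poly z q1 \<longrightarrow> is_poly z q2 \<longrightarrow> p \<in> hprod mul add z q1 q2 \<longrightarrow>
        poly_assoc mul add z p q1 \<or> poly_assoc mul add z p q2)"

end

theory Submission
  imports Defs
begin

text \<open>Irreducibility applied to the last factor of the hyperproduct gives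
  p ~ q n or p ~ r for some r in the hyperproduct of q 1, ..., q (n - 1). In the second case
  p is a nonzero scalar multiple of r, and scalar multiples pass through hyperproducts by
  distributivity, so the induction hypothesis must speak about nonzero scalar multiples of
  elements of iterated hyperproducts.\<close>

locale hyperfield_structure =
  fixes mul :: "'a \<Rightarrow> 'a \<Rightarrow> 'a" and add :: "'a \<Rightarrow> 'a \<Rightarrow> 'a set" and z e :: 'a
  assumes hyperfield: "hyperfield mul add z e"
begin

lemma mul_assoc: "mul (mul a b) c = mul a (mul b c)"
  and mul_commute: "mul a b = mul b a"
  and mul_one_left: "mul e a = a"
  and unit_neq_zero: "e \<noteq> z"
  and mul_nonzero: "a \<noteq> z \<Longrightarrow> b \<noteq> z \<Longrightarrow> mul a b \<noteq> z"
  and mul_inverse: "a \<noteq> z \<Longrightarrow> \<exists>b. b \<noteq> z \<and> mul a b = e"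
  and mul_distrib_hyperadd: "add (mul a b) (mul a c) = mul a ` add b c"
  and add_commute: "add a b = add b a"
  and add_zero: "add a z = {a}"
  using hyperfield unfolding hyperfield_def by metis+

text \<open>Absorption by zero is not an axiom; it comes from distributivity and a \<boxplus> 0 = {a}.\<close>

lemma mul_zero_right_nonzero:
  assumes "a \<noteq> z"
  shows "mul a z = z"
proof -
  obtain b where b: "mul a b = e" using mul_inverse[OF assms] by blast
  have z_eq: "mul a (mul b z) = z" by (metis b mul_assoc mul_one_left)
  have "add (mul a z) z = add z (mul a z)" by (rule add_commute)
  also have "\<dots> = mul a ` add (mul b z) z" by (metis z_eq mul_distrib_hyperadd)
  also have "\<dots> = {z}" by (simp add: add_zero z_eq)
  finally show ?thesis by (simp add: add_zero)
qed

lemma mul_zero_left: "mul z b = z"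
proof -
  have "add z (mul z z) = add (mul z e) (mul z z)"
    using mul_zero_right_nonzero[OF unit_neq_zero] mul_commute by metis
  also have "\<dots> = {mul z e}" by (simp add: mul_distrib_hyperadd add_zero)
  finally have "mul z z = z"
    using mul_zero_right_nonzero[OF unit_neq_zero] add_commute add_zero mul_commute
    by (metis singleton_inject)
  then show ?thesis
    using mul_zero_right_nonzero mul_commute by (cases "b = z") auto
qed

lemma is_poly_scale: "is_poly z r \<Longrightarrow> is_poly z (\<lambda>i. mul c (r i))"
proof -
  assume "is_poly z r"
  moreover have "{i. mul c (r i) \<noteq> z} \<subseteq> {i. r i \<noteq> z}"
    using mul_zero_left mul_commute by auto
  ultimately show ?thesis unfolding is_poly_def by (blast intro: finite_subset)
qed

lemma hsum_replicate_zero: "hsum add z (replicate m z) = {z}"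
  by (induction m) (auto simp: add_zero)

lemma hsum_scale: "mul c ` hsum add z xs = hsum add z (map (mul c) xs)"
proof (induction xs)
  case Nil
  then show ?case by (simp add: mul_zero_left mul_commute[of c])
next
  case (Cons x xs)
  have "mul c ` hsum add z (x # xs) = (\<Union>y\<in>hsum add z xs. add (mul c x) (mul c y))"
    by (auto simp: mul_distrib_hyperadd)
  also have "\<dots> = (\<Union>y\<in>mul c ` hsum add z xs. add (mul c x) y)" by auto
  finally show ?case using Cons by simp
qed

lemma hprod_const_poly_iff:
  "p \<in> hprod mul add z (const_poly z c) r \<longleftrightarrow> is_poly z p \<and> p = (\<lambda>i. mul c (r i))"
proof -
  have "map (\<lambda>k. mul (const_poly z c k) (r (i - k))) [0..<Suc i] = mul c (r i) # replicate i z"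
    for i
  proof -
    have "map (\<lambda>k. mul (const_poly z c k) (r (i - k))) [1..<Suc i] = replicate i z"
      by (rule nth_equalityI) (auto simp: const_poly_def mul_zero_left simp del: upt_Suc)
    moreover have "[0..<Suc i] = 0 # [1..<Suc i]" by (simp add: upt_conv_Cons)
    ultimately show ?thesis by (simp add: const_poly_def)
  qed
  moreover have "hsum add z (x # replicate i z) = {x}" for x i
    by (simp add: hsum_replicate_zero add_zero)
  ultimately show ?thesis unfolding hprod_def by auto
qed

lemma poly_assoc_iff:
  "poly_assoc mul add z p r \<longleftrightarrow> is_poly z p \<and> (\<exists>a. a \<noteq> z \<and> p = (\<lambda>i. mul a (r i)))"
  unfolding poly_assoc_def hprod_const_poly_iff by blast

lemma hprod_scale_left:
  assumes "s \<in> hprod mul add z r q"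
  shows "(\<lambda>i. mul c (s i)) \<in> hprod mul add z (\<lambda>i. mul c (r i)) q"
proof -
  have "is_poly z (\<lambda>i. mul c (s i))"
    using assms is_poly_scale unfolding hprod_def by auto
  moreover have "mul c (s i) \<in> hsum add z (map (\<lambda>k. mul (mul c (r k)) (q (i - k))) [0..<Suc i])"
    for i
  proof -
    have "s i \<in> hsum add z (map (\<lambda>k. mul (r k) (q (i - k))) [0..<Suc i])"
      using assms unfolding hprod_def by auto
    then have "mul c (s i) \<in> hsum add z (map (mul c) (map (\<lambda>k. mul (r k) (q (i - k))) [0..<Suc i]))"
      using hsum_scale[of c] by blast
    then show ?thesis by (simp add: mul_assoc comp_def)
  qed
  ultimately show ?thesis unfolding hprod_def by auto
qed

lemma hprodn_is_poly:
  assumes "\<forall>i\<in>{1..Suc m}. is_poly z (q i)" and "r \<in> hprodn mul add z q (Suc m)"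
  shows "is_poly z r"
  using assms by (induction m arbitrary: r) (auto simp: hprod_def)

lemma irreducible_scaled_hprodn_assoc_factor:
  assumes irr: "poly_irreducible mul add z p"
    and q: "\<forall>i\<in>{1..Suc m}. is_poly z (q i)"
    and r: "r \<in> hprodn mul add z q (Suc m)"
    and c: "c \<noteq> z" and p: "p = (\<lambda>i. mul c (r i))"
  shows "\<exists>i\<in>{1..Suc m}. poly_assoc mul add z p (q i)"
  using q r c p
proof (induction m arbitrary: c r)
  case 0
  then show ?case by (auto simp: poly_assoc_iff is_poly_scale)
next
  case (Suc m)
  let ?q = "q (Suc (Suc m))"
  from Suc.prems(2) obtain r' where r': "r' \<in> hprodn mul add z q (Suc m)"
    and "r \<in> hprod mul add z r' ?q" by auto
  then have "p \<in> hprod mul add z (\<lambda>i. mul c (r' i)) ?q"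
    using hprod_scale_left Suc.prems(4) by simp
  moreover have "is_poly z (\<lambda>i. mul c (r' i))"
    using hprodn_is_poly[OF _ r'] Suc.prems(1) is_poly_scale by auto
  moreover have "is_poly z ?q" using Suc.prems(1) by auto
  ultimately consider "poly_assoc mul add z p (\<lambda>i. mul c (r' i))" | "poly_assoc mul add z p ?q"
    using irr unfolding poly_irreducible_def by blast
  then show ?case
  proof cases
    case 1
    then obtain a where "a \<noteq> z" and "p = (\<lambda>i. mul (mul a c) (r' i))"
      by (auto simp: poly_assoc_iff mul_assoc)
    moreover have "mul a c \<noteq> z" using \<open>a \<noteq> z\<close> Suc.prems(3) mul_nonzero by blast
    ultimately show ?thesis using Suc.IH[OF _ r'] Suc.prems(1) by force
  next
    case 2
    then show ?thesis by (intro bexI[of _ "Suc (Suc m)"]) auto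
  qed
qed

end

theorem mainTheorem2:
  fixes mul :: "'a \<Rightarrow> 'a \<Rightarrow> 'a" and add :: "'a \<Rightarrow> 'a \<Rightarrow> 'a set" and z e :: 'a
    and p :: "nat \<Rightarrow> 'a" and q :: "nat \<Rightarrow> nat \<Rightarrow> 'a" and n :: nat
  assumes "hyperfield mul add z e"
    and "is_poly z p"
    and "poly_irreducible mul add z p"
    and "n \<ge> 2"
    and "\<forall>i\<in>{1..n}. is_poly z (q i)"
    and "p \<in> hprodn mul add z q n"
  shows "\<exists>i\<in>{1..n}. poly_assoc mul add z p (q i)"
proof -
  interpret hyperfield_structure mul add z e by (rule hyperfield_structure.intro) fact
  obtain m where n: "n = Suc m" using assms(4) by (cases n) auto
  show ?thesis
    using irreducible_scaled_hprodn_assoc_factor[of p m q p e] assms(3,5,6)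
    by (simp add: n unit_neq_zero mul_one_left)
qed

end
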